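(* Let $\Gamma$ be a finitely generated group acting by permutations on a countable set $X$, and $w:X\to(0,\infty)$ balanced. If there exists a $w$-compression system, then there is no $w$-invariant mean on $X$.
   Context: $w$ is balanced: for every $g\in\Gamma$, $x\mapsto w(gx)/w(x)$ is bounded on $X$. A $w$-compression system is a finite set $T\subset\Gamma$ together with bounded nonnegative functions $\Psi_g:X\to\mathbb{R}$ ($g\in T$) such that for every $x\in X$: $\sum_{g\in T}\Psi_g(x)=1$ and $\sum_{g\in T}\Psi_g(g^{-1}x)\frac{w(g^{-1}x)}{w(x)}<\frac12$. A mean on $X$ is a finitely additive probability measure on all subsets of $X$ (extended to $\ell^\infty(X)$); it is $w$-invariant if $\mu(gA)=\int_A\frac{w(gx)}{w(x)}\,d\mu(x)$ for all $g\in\Gamma$, $A\subseteq X$. *)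

theory Defs
  imports "HOL-Analysis.Analysis" "HOL-Algebra.Group_Action" "HOL-Algebra.Generated_Groups"
begin

definition fin_generated :: "('g, 'b) monoid_scheme \<Rightarrow> bool" where
  "fin_generated G \<longleftrightarrow> (\<exists>S. finite S \<and> S \<subseteq> carrier G \<and> generate G S = carrier G)"

definition bounded_on :: "'x set \<Rightarrow> ('x \<Rightarrow> real) \<Rightarrow> bool" where
  "bounded_on X f \<longleftrightarrow> (\<exists>C. \<forall>x\<in>X. \<bar>f x\<bar> \<le> C)"

definition balanced :: "('g, 'b) monoid_scheme \<Rightarrow> 'x set \<Rightarrow> ('g \<Rightarrow> 'x \<Rightarrow> 'x) \<Rightarrow> ('x \<Rightarrow> real) \<Rightarrow> bool" where
  "balanced G X \<phi> w \<longleftrightarrow> (\<forall>g\<in>carrier G. bounded_on X (\<lambda>x. w (\<phi> g x) / w x))"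

definition compression_system ::
  "('g, 'b) monoid_scheme \<Rightarrow> 'x set \<Rightarrow> ('g \<Rightarrow> 'x \<Rightarrow> 'x) \<Rightarrow> ('x \<Rightarrow> real)
     \<Rightarrow> 'g set \<Rightarrow> ('g \<Rightarrow> 'x \<Rightarrow> real) \<Rightarrow> bool" where
  "compression_system G X \<phi> w T \<Psi> \<longleftrightarrow>
     finite T \<and> T \<subseteq> carrier G \<and>
     (\<forall>g\<in>T. bounded_on X (\<Psi> g) \<and> (\<forall>x\<in>X. \<Psi> g x \<ge> 0)) \<and>
     (\<forall>x\<in>X. (\<Sum>g\<in>T. \<Psi> g x) = 1 \<and>
        (\<Sum>g\<in>T. \<Psi> g (\<phi> (inv\<^bsub>G\<^esub> g) x) * (w (\<phi> (inv\<^bsub>G\<^esub> g) x) / w x)) < 1/2)"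

text \<open>A mean on X, given as its (unique) extension to l-infinity(X): a positive,
  normalised linear functional on the bounded functions on X.  The underlying
  finitely additive probability measure is A \<mapsto> m (indicator A).\<close>
definition is_mean :: "'x set \<Rightarrow> (('x \<Rightarrow> real) \<Rightarrow> real) \<Rightarrow> bool" where
  "is_mean X m \<longleftrightarrow>
     (\<forall>f h. bounded_on X f \<longrightarrow> bounded_on X h \<longrightarrow> m (\<lambda>x. f x + h x) = m f + m h) \<and>
     (\<forall>c f. bounded_on X f \<longrightarrow> m (\<lambda>x. c * f x) = c * m f) \<and>
     (\<forall>f. bounded_on X f \<longrightarrow> (\<forall>x\<in>X. f x \<ge> 0) \<longrightarrow> m f \<ge> 0) \<and>
     m (\<lambda>x. 1) = 1"

definition w_invariant ::
  "('g, 'b) monoid_scheme \<Rightarrow> 'x set \<Rightarrow> ('g \<Rightarrow> 'x \<Rightarrow> 'x) \<Rightarrow> ('x \<Rightarrow> real)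
     \<Rightarrow> (('x \<Rightarrow> real) \<Rightarrow> real) \<Rightarrow> bool" where
  "w_invariant G X \<phi> w m \<longleftrightarrow>
     (\<forall>g\<in>carrier G. \<forall>A. A \<subseteq> X \<longrightarrow>
        m (indicator (\<phi> g ` A)) = m (\<lambda>x. indicator A x * (w (\<phi> g x) / w x)))"

end

theory Submission
  imports Defs
begin

text \<open>
  A w-invariant mean m satisfies m (f \<circ> g\<inverse>) = m (x \<mapsto> f x \<cdot> w (g x) / w x) for indicators f,
  hence, by linearity and uniform approximation by level-set step functions, for every bounded
  nonnegative f. Applied to f x = \<Psi> g x \<cdot> w x / w (g x), this says that the g-th summand of the
  compression inequality has the same mean as \<Psi> g. Summing over g \<in> T, the mean of the
  left-hand side would be m (\<Sum>g. \<Psi> g) = 1, although the pointwise bound forces it to be at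
  most 1/2.
\<close>

context group_action
begin

lemma group_of_action: "group G"
  by (rule group_hom.axioms(1)[OF group_hom])

lemma action_inv_left: "g \<in> carrier G \<Longrightarrow> x \<in> E \<Longrightarrow> \<phi> (inv g) (\<phi> g x) = x"
  by (rule orbit_sym_aux) (assumption | rule refl)+

lemma action_inv_right: "g \<in> carrier G \<Longrightarrow> x \<in> E \<Longrightarrow> \<phi> g (\<phi> (inv g) x) = x"
  using action_inv_left[of "inv g" x] group.inv_closed[OF group_of_action] group.inv_inv[OF group_of_action]
  by simp

lemma indicator_action_inv:
  assumes "g \<in> carrier G" "A \<subseteq> E" "x \<in> E"
  shows "indicator A (\<phi> (inv g) x) = indicator (\<phi> g ` A) x"
proof -
  have "\<phi> (inv g) x \<in> A \<longleftrightarrow> x \<in> \<phi> g ` A"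
  proof
    assume "\<phi> (inv g) x \<in> A"
    then show "x \<in> \<phi> g ` A"
      using action_inv_right[OF assms(1,3)] by (rule rev_image_eqI[OF _ sym])
  next
    assume "x \<in> \<phi> g ` A"
    then obtain y where "y \<in> A" "x = \<phi> g y" by blast
    then show "\<phi> (inv g) x \<in> A" using action_inv_left[OF assms(1)] assms(2) by auto
  qed
  then show ?thesis by (simp add: indicator_def)
qed

end

lemma bounded_on_const: "bounded_on X (\<lambda>x. c)"
  unfolding bounded_on_def by blast

lemma bounded_on_indicator: "bounded_on X (indicator A)"
  unfolding bounded_on_def by (rule exI[of _ 1]) (simp add: indicator_def)

lemma bounded_on_add:
  assumes "bounded_on X f" "bounded_on X h"
  shows "bounded_on X (\<lambda>x. f x + h x)"
proof -
  obtain A B where "\<forall>x\<in>X. \<bar>f x\<bar> \<le> A" "\<forall>x\<in>X. \<bar>h x\<bar> \<le> B"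
    using assms unfolding bounded_on_def by blast
  then have "\<forall>x\<in>X. \<bar>f x + h x\<bar> \<le> A + B" by (smt (verit))
  then show ?thesis unfolding bounded_on_def by blast
qed

lemma bounded_on_mult:
  assumes "bounded_on X f" "bounded_on X h"
  shows "bounded_on X (\<lambda>x. f x * h x)"
proof -
  obtain A B where "\<forall>x\<in>X. \<bar>f x\<bar> \<le> A" "\<forall>x\<in>X. \<bar>h x\<bar> \<le> B"
    using assms unfolding bounded_on_def by blast
  then have "\<forall>x\<in>X. \<bar>f x * h x\<bar> \<le> A * B" by (simp add: abs_mult mult_mono')
  then show ?thesis unfolding bounded_on_def by blast
qed

lemma bounded_on_cmult: "bounded_on X f \<Longrightarrow> bounded_on X (\<lambda>x. c * f x)"
  by (rule bounded_on_mult[OF bounded_on_const])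

lemma bounded_on_sum:
  "(\<And>k. k \<in> K \<Longrightarrow> bounded_on X (F k)) \<Longrightarrow> bounded_on X (\<lambda>x. \<Sum>k\<in>K. F k x)"
  by (induction K rule: infinite_finite_induct) (auto intro: bounded_on_const bounded_on_add)

lemma bounded_on_compose:
  "bounded_on X f \<Longrightarrow> (\<And>x. x \<in> X \<Longrightarrow> h x \<in> X) \<Longrightarrow> bounded_on X (\<lambda>x. f (h x))"
  unfolding bounded_on_def by blast

lemma bounded_on_cong:
  "bounded_on X f \<Longrightarrow> (\<And>x. x \<in> X \<Longrightarrow> h x = f x) \<Longrightarrow> bounded_on X h"
  unfolding bounded_on_def by auto

lemma bounded_onE:
  assumes "bounded_on X f"
  obtains B where "0 \<le> B" "\<And>x. x \<in> X \<Longrightarrow> \<bar>f x\<bar> \<le> B"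
proof -
  obtain C where "\<And>x. x \<in> X \<Longrightarrow> \<bar>f x\<bar> \<le> C" using assms unfolding bounded_on_def by blast
  then show thesis by (intro that[of "max C 0"]) (auto simp: le_max_iff_disj)
qed

lemma is_mean_add:
  "is_mean X m \<Longrightarrow> bounded_on X f \<Longrightarrow> bounded_on X h \<Longrightarrow> m (\<lambda>x. f x + h x) = m f + m h"
  unfolding is_mean_def by simp

lemma is_mean_cmult: "is_mean X m \<Longrightarrow> bounded_on X f \<Longrightarrow> m (\<lambda>x. c * f x) = c * m f"
  unfolding is_mean_def by simp

lemma is_mean_nonneg:
  "is_mean X m \<Longrightarrow> bounded_on X f \<Longrightarrow> (\<And>x. x \<in> X \<Longrightarrow> 0 \<le> f x) \<Longrightarrow> 0 \<le> m f"
  unfolding is_mean_def by simp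

lemma is_mean_const: "is_mean X m \<Longrightarrow> m (\<lambda>x. c) = c"
  using is_mean_cmult[OF _ bounded_on_const[of X 1], of m c] unfolding is_mean_def by simp

lemma is_mean_mono:
  assumes m: "is_mean X m" and "bounded_on X f" "bounded_on X h" "\<And>x. x \<in> X \<Longrightarrow> f x \<le> h x"
  shows "m f \<le> m h"
proof -
  have "0 \<le> m (\<lambda>x. h x + (-1) * f x)"
    using assms by (intro is_mean_nonneg[OF m] bounded_on_add bounded_on_cmult) auto
  also have "\<dots> = m h - m f"
    using is_mean_add[OF m assms(3) bounded_on_cmult[OF assms(2)], of "-1"]
      is_mean_cmult[OF m assms(2), of "-1"] by simp
  finally show ?thesis by simp
qed

lemma is_mean_cong:
  assumes m: "is_mean X m" and "bounded_on X f" "bounded_on X h" "\<And>x. x \<in> X \<Longrightarrow> f x = h x"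
  shows "m f = m h"
proof (rule antisym)
  show "m f \<le> m h" by (rule is_mean_mono[OF assms(1-3)]) (simp add: assms(4))
  show "m h \<le> m f" by (rule is_mean_mono[OF assms(1,3,2)]) (simp add: assms(4))
qed

lemma is_mean_sum:
  assumes m: "is_mean X m"
  shows "(\<And>k. k \<in> K \<Longrightarrow> bounded_on X (F k)) \<Longrightarrow> m (\<lambda>x. \<Sum>k\<in>K. F k x) = (\<Sum>k\<in>K. m (F k))"
proof (induction K rule: infinite_finite_induct)
  case (insert a K)
  then show ?case by (simp add: is_mean_add[OF m] bounded_on_sum)
qed (simp_all add: is_mean_const[OF m])

lemma is_mean_abs_diff_le:
  assumes m: "is_mean X m" and f: "bounded_on X f" and h: "bounded_on X h"
    and close: "\<And>x. x \<in> X \<Longrightarrow> \<bar>f x - h x\<bar> \<le> e"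
  shows "\<bar>m f - m h\<bar> \<le> e"
proof -
  have "m f \<le> m (\<lambda>x. h x + e)"
    by (rule is_mean_mono[OF m f bounded_on_add[OF h bounded_on_const]])
      (use close in \<open>fastforce simp: abs_le_iff\<close>)
  moreover have "m h \<le> m (\<lambda>x. f x + e)"
    by (rule is_mean_mono[OF m h bounded_on_add[OF f bounded_on_const]])
      (use close in \<open>fastforce simp: abs_le_iff\<close>)
  ultimately show ?thesis
    by (simp add: is_mean_add[OF m] f h bounded_on_const is_mean_const[OF m] abs_le_iff)
qed

lemma level_set_sum_approx:
  fixes f :: "'x \<Rightarrow> real"
  assumes "0 < \<delta>" "x \<in> X" "0 \<le> f x" "f x \<le> real N * \<delta>"
  shows "\<bar>f x - (\<Sum>k=1..N. \<delta> * indicator {y\<in>X. real k * \<delta> \<le> f y} x)\<bar> \<le> \<delta>"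
proof -
  define t where "t = f x / \<delta>"
  have "0 \<le> t" using assms(1,3) by (simp add: t_def)
  have le_t: "real k * \<delta> \<le> f x \<longleftrightarrow> k \<le> nat \<lfloor>t\<rfloor>" for k :: nat
  proof -
    have "real k * \<delta> \<le> f x \<longleftrightarrow> real k \<le> t" using assms(1) by (simp add: t_def pos_le_divide_eq)
    also have "\<dots> \<longleftrightarrow> k \<le> nat \<lfloor>t\<rfloor>" using \<open>0 \<le> t\<close> by (simp add: le_floor_iff le_nat_iff)
    finally show ?thesis .
  qed
  have t_floor: "real (nat \<lfloor>t\<rfloor>) \<le> t" "t < real (nat \<lfloor>t\<rfloor>) + 1"
    using \<open>0 \<le> t\<close> by (simp_all add: of_nat_nat)
  have "nat \<lfloor>t\<rfloor> \<le> N"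
  proof -
    have "t \<le> real N" using assms(1,4) by (simp add: t_def pos_divide_le_eq)
    then show ?thesis using t_floor(1) by linarith
  qed
  have "{1..N} \<inter> {k. real k * \<delta> \<le> f x} = {1..N} \<inter> {k. k \<le> nat \<lfloor>t\<rfloor>}"
    by (simp only: le_t)
  also have "\<dots> = {1..nat \<lfloor>t\<rfloor>}"
    using \<open>nat \<lfloor>t\<rfloor> \<le> N\<close> by auto
  finally have levels: "{1..N} \<inter> {k. real k * \<delta> \<le> f x} = {1..nat \<lfloor>t\<rfloor>}" .
  have "(\<Sum>k=1..N. \<delta> * indicator {y\<in>X. real k * \<delta> \<le> f y} x)
      = \<delta> * (\<Sum>k=1..N. of_bool (real k * \<delta> \<le> f x))"
    using assms(2) by (simp add: sum_distrib_left indicator_def)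
  also have "\<dots> = \<delta> * real (card ({1..N} \<inter> {k. real k * \<delta> \<le> f x}))"
    by simp
  also have "\<dots> = \<delta> * real (nat \<lfloor>t\<rfloor>)"
    unfolding levels by simp
  finally have "f x - (\<Sum>k=1..N. \<delta> * indicator {y\<in>X. real k * \<delta> \<le> f y} x)
      = \<delta> * (t - real (nat \<lfloor>t\<rfloor>))"
    using assms(1) by (simp add: t_def right_diff_distrib)
  then have "\<bar>f x - (\<Sum>k=1..N. \<delta> * indicator {y\<in>X. real k * \<delta> \<le> f y} x)\<bar>
      = \<delta> * \<bar>t - real (nat \<lfloor>t\<rfloor>)\<bar>"
    using assms(1) by (simp add: abs_mult)
  also have "\<dots> \<le> \<delta> * 1"
  proof (rule mult_left_mono)
    show "\<bar>t - real (nat \<lfloor>t\<rfloor>)\<bar> \<le> 1" unfolding abs_le_iff using t_floor by linarith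
  qed (use assms(1) in simp)
  finally show ?thesis by simp
qed

lemma is_mean_transfer_step_function:
  assumes m: "is_mean X m" and hX: "\<And>x. x \<in> X \<Longrightarrow> h x \<in> X" and r: "bounded_on X r"
    and indicators: "\<And>A. A \<subseteq> X \<Longrightarrow> m (\<lambda>x. indicator A (h x)) = m (\<lambda>x. indicator A x * r x)"
    and A: "\<And>k. k \<in> K \<Longrightarrow> A k \<subseteq> X"
  shows "m (\<lambda>x. \<Sum>k\<in>K. c * indicator (A k) (h x)) = m (\<lambda>x. (\<Sum>k\<in>K. c * indicator (A k) x) * r x)"
proof -
  have ind_h: "bounded_on X (\<lambda>x. indicator (A k) (h x))" for k
    by (rule bounded_on_compose[OF bounded_on_indicator hX])
  have ind_r: "bounded_on X (\<lambda>x. indicator (A k) x * r x)" for k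
    by (rule bounded_on_mult[OF bounded_on_indicator r])
  have "m (\<lambda>x. \<Sum>k\<in>K. c * indicator (A k) (h x)) = (\<Sum>k\<in>K. m (\<lambda>x. c * indicator (A k) (h x)))"
    by (rule is_mean_sum[OF m]) (rule bounded_on_cmult[OF ind_h])
  also have "\<dots> = (\<Sum>k\<in>K. m (\<lambda>x. c * (indicator (A k) x * r x)))"
    by (rule sum.cong[OF refl]) (simp only: is_mean_cmult[OF m ind_h] is_mean_cmult[OF m ind_r] indicators[OF A])
  also have "\<dots> = m (\<lambda>x. \<Sum>k\<in>K. c * (indicator (A k) x * r x))"
    by (rule is_mean_sum[OF m, symmetric]) (rule bounded_on_cmult[OF ind_r])
  also have "\<dots> = m (\<lambda>x. (\<Sum>k\<in>K. c * indicator (A k) x) * r x)"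
    by (simp only: sum_distrib_right mult.assoc)
  finally show ?thesis .
qed

lemma is_mean_transfer_from_indicators:
  assumes m: "is_mean X m" and hX: "\<And>x. x \<in> X \<Longrightarrow> h x \<in> X" and r: "bounded_on X r"
    and indicators: "\<And>A. A \<subseteq> X \<Longrightarrow> m (\<lambda>x. indicator A (h x)) = m (\<lambda>x. indicator A x * r x)"
    and f: "bounded_on X f" and f_nonneg: "\<And>x. x \<in> X \<Longrightarrow> 0 \<le> f x"
  shows "m (\<lambda>x. f (h x)) = m (\<lambda>x. f x * r x)"
proof -
  obtain M where M: "\<And>x. x \<in> X \<Longrightarrow> \<bar>f x\<bar> \<le> M" using bounded_onE[OF f] by blast
  obtain R where R: "0 \<le> R" "\<And>x. x \<in> X \<Longrightarrow> \<bar>r x\<bar> \<le> R" using bounded_onE[OF r] by blast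
  have fh: "bounded_on X (\<lambda>x. f (h x))" by (rule bounded_on_compose[OF f hX])
  have fr: "bounded_on X (\<lambda>x. f x * r x)" by (rule bounded_on_mult[OF f r])
  have approx: "\<bar>m (\<lambda>x. f (h x)) - m (\<lambda>x. f x * r x)\<bar> \<le> (1 + R) * \<delta>" if "0 < \<delta>" for \<delta>
  proof -
    define N where "N = nat \<lceil>M / \<delta>\<rceil>"
    define A where "A k = {y\<in>X. real k * \<delta> \<le> f y}" for k :: nat
    define s where "s x = (\<Sum>k=1..N. \<delta> * indicator (A k) x)" for x
    have s: "bounded_on X s" unfolding s_def by (intro bounded_on_sum bounded_on_cmult bounded_on_indicator)
    have f_s: "\<bar>f x - s x\<bar> \<le> \<delta>" if "x \<in> X" for x
    proof (unfold s_def A_def, rule level_set_sum_approx[where f = f, OF \<open>0 < \<delta>\<close> that f_nonneg[OF that]])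
      have "M / \<delta> \<le> real N" unfolding N_def by (rule real_nat_ceiling_ge)
      then show "f x \<le> real N * \<delta>" using M[OF that] \<open>0 < \<delta>\<close> by (simp add: pos_divide_le_eq)
    qed
    have "A k \<subseteq> X" for k unfolding A_def by blast
    then have s_eq: "m (\<lambda>x. s (h x)) = m (\<lambda>x. s x * r x)"
      unfolding s_def by (intro is_mean_transfer_step_function[OF m hX r indicators])
    have "\<bar>m (\<lambda>x. f (h x)) - m (\<lambda>x. s (h x))\<bar> \<le> \<delta>"
    proof (rule is_mean_abs_diff_le[OF m fh bounded_on_compose[where h = h, OF s hX]])
      show "\<bar>f (h x) - s (h x)\<bar> \<le> \<delta>" if "x \<in> X" for x by (rule f_s[OF hX[OF that]])
    qed
    moreover have "\<bar>m (\<lambda>x. f x * r x) - m (\<lambda>x. s x * r x)\<bar> \<le> R * \<delta>"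
    proof (rule is_mean_abs_diff_le[OF m fr bounded_on_mult[OF s r]])
      fix x assume "x \<in> X"
      have "\<bar>f x * r x - s x * r x\<bar> = \<bar>f x - s x\<bar> * \<bar>r x\<bar>"
        by (metis abs_mult left_diff_distrib)
      also have "\<dots> \<le> \<delta> * R"
        using \<open>x \<in> X\<close> f_s R \<open>0 < \<delta>\<close> by (intro mult_mono) auto
      finally show "\<bar>f x * r x - s x * r x\<bar> \<le> R * \<delta>" by (simp only: mult.commute)
    qed
    moreover have "(1 + R) * \<delta> = \<delta> + R * \<delta>" by (simp add: distrib_right)
    ultimately show ?thesis using s_eq by linarith
  qed
  have "\<bar>m (\<lambda>x. f (h x)) - m (\<lambda>x. f x * r x)\<bar> \<le> 0 + e" if "0 < e" for e
  proof -
    have "(1 + R) * (e / (1 + R)) = e" using \<open>0 \<le> R\<close> by simp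
    then show ?thesis using approx[of "e / (1 + R)"] that \<open>0 \<le> R\<close> by simp
  qed
  then have "\<bar>m (\<lambda>x. f (h x)) - m (\<lambda>x. f x * r x)\<bar> \<le> 0" by (rule field_le_epsilon)
  then show ?thesis by simp
qed

context group_action
begin

lemma bounded_on_weight_ratio:
  assumes "balanced G E \<phi> w" "g \<in> carrier G"
  shows "bounded_on E (\<lambda>x. w (\<phi> g x) / w x)"
  using assms unfolding balanced_def by blast

lemma w_invariant_mean_translate:
  assumes bal: "balanced G E \<phi> w" and g: "g \<in> carrier G"
    and m: "is_mean E m" and inv_m: "w_invariant G E \<phi> w m"
    and f: "bounded_on E f" and f_nonneg: "\<And>x. x \<in> E \<Longrightarrow> 0 \<le> f x"
  shows "m (\<lambda>x. f (\<phi> (inv g) x)) = m (\<lambda>x. f x * (w (\<phi> g x) / w x))"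
proof (rule is_mean_transfer_from_indicators[OF m _ bounded_on_weight_ratio[OF bal g] _ f f_nonneg])
  have inv_g: "inv g \<in> carrier G" by (rule group.inv_closed[OF group_of_action g])
  show inv_g_E: "\<phi> (inv g) x \<in> E" if "x \<in> E" for x by (rule element_image[OF inv_g that refl])
  fix A assume "A \<subseteq> E"
  have "m (\<lambda>x. indicator A (\<phi> (inv g) x)) = m (indicator (\<phi> g ` A))"
  proof (rule is_mean_cong[OF m _ bounded_on_indicator])
    show "bounded_on E (\<lambda>x. indicator A (\<phi> (inv g) x))"
      by (rule bounded_on_compose[OF bounded_on_indicator inv_g_E])
  qed (rule indicator_action_inv[OF g \<open>A \<subseteq> E\<close>])
  also have "\<dots> = m (\<lambda>x. indicator A x * (w (\<phi> g x) / w x))"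
    using inv_m g \<open>A \<subseteq> E\<close> unfolding w_invariant_def by blast
  finally show "m (\<lambda>x. indicator A (\<phi> (inv g) x)) = m (\<lambda>x. indicator A x * (w (\<phi> g x) / w x))" .
qed

lemma bounded_on_compression_term:
  assumes "balanced G E \<phi> w" "g \<in> carrier G" "bounded_on E \<Psi>"
  shows "bounded_on E (\<lambda>x. \<Psi> (\<phi> (inv g) x) * (w (\<phi> (inv g) x) / w x))"
proof (rule bounded_on_mult)
  have inv_g: "inv g \<in> carrier G" by (rule group.inv_closed[OF group_of_action assms(2)])
  show "bounded_on E (\<lambda>x. \<Psi> (\<phi> (inv g) x))"
    by (rule bounded_on_compose[OF assms(3)]) (rule element_image[OF inv_g _ refl])
  show "bounded_on E (\<lambda>x. w (\<phi> (inv g) x) / w x)"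
    by (rule bounded_on_weight_ratio[OF assms(1) inv_g])
qed

lemma w_invariant_mean_compression_term:
  assumes bal: "balanced G E \<phi> w" and w_pos: "\<And>x. x \<in> E \<Longrightarrow> 0 < w x" and g: "g \<in> carrier G"
    and m: "is_mean E m" and inv_m: "w_invariant G E \<phi> w m"
    and \<Psi>: "bounded_on E \<Psi>" and \<Psi>_nonneg: "\<And>x. x \<in> E \<Longrightarrow> 0 \<le> \<Psi> x"
  shows "m (\<lambda>x. \<Psi> (\<phi> (inv g) x) * (w (\<phi> (inv g) x) / w x)) = m \<Psi>"
proof -
  have inv_g: "inv g \<in> carrier G" by (rule group.inv_closed[OF group_of_action g])
  have g_E: "\<phi> g x \<in> E" if "x \<in> E" for x by (rule element_image[OF g that refl])
  define F where "F x = \<Psi> x * (w x / w (\<phi> g x))" for x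
  have "bounded_on E (\<lambda>x. w (\<phi> (inv g) (\<phi> g x)) / w (\<phi> g x))"
    by (rule bounded_on_compose[OF bounded_on_weight_ratio[OF bal inv_g] g_E])
  then have "bounded_on E (\<lambda>x. w x / w (\<phi> g x))"
    by (rule bounded_on_cong) (simp add: action_inv_left[OF g])
  then have F: "bounded_on E F"
    unfolding F_def by (rule bounded_on_mult[OF \<Psi>])
  have F_nonneg: "0 \<le> F x" if "x \<in> E" for x
    unfolding F_def using \<Psi>_nonneg[OF that] w_pos[OF that] w_pos[OF g_E[OF that]] by simp
  have "m (\<lambda>x. \<Psi> (\<phi> (inv g) x) * (w (\<phi> (inv g) x) / w x)) = m (\<lambda>x. F (\<phi> (inv g) x))"
  proof (rule is_mean_cong[OF m bounded_on_compression_term[OF bal g \<Psi>]])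
    show "bounded_on E (\<lambda>x. F (\<phi> (inv g) x))"
      by (rule bounded_on_compose[OF F]) (rule element_image[OF inv_g _ refl])
  qed (simp add: F_def action_inv_right[OF g])
  also have "\<dots> = m (\<lambda>x. F x * (w (\<phi> g x) / w x))"
    by (rule w_invariant_mean_translate[OF bal g m inv_m F F_nonneg])
  also have "\<dots> = m \<Psi>"
  proof (rule is_mean_cong[OF m bounded_on_mult[OF F bounded_on_weight_ratio[OF bal g]] \<Psi>])
    show "F x * (w (\<phi> g x) / w x) = \<Psi> x" if "x \<in> E" for x
      unfolding F_def using w_pos[OF that] w_pos[OF g_E[OF that]] by simp
  qed
  finally show ?thesis .
qed

lemma no_w_invariant_mean_if_compression_system:
  assumes bal: "balanced G E \<phi> w" and w_pos: "\<And>x. x \<in> E \<Longrightarrow> 0 < w x"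
    and cs: "compression_system G E \<phi> w T \<Psi>"
    and m: "is_mean E m" and inv_m: "w_invariant G E \<phi> w m"
  shows False
proof -
  from cs have T: "finite T" "T \<subseteq> carrier G"
    and \<Psi>: "\<And>g. g \<in> T \<Longrightarrow> bounded_on E (\<Psi> g)" "\<And>g x. g \<in> T \<Longrightarrow> x \<in> E \<Longrightarrow> 0 \<le> \<Psi> g x"
    and partition: "\<And>x. x \<in> E \<Longrightarrow> (\<Sum>g\<in>T. \<Psi> g x) = 1"
    and compression: "\<And>x. x \<in> E \<Longrightarrow>
      (\<Sum>g\<in>T. \<Psi> g (\<phi> (inv g) x) * (w (\<phi> (inv g) x) / w x)) < 1/2"
    unfolding compression_system_def by auto
  define S where "S g x = \<Psi> g (\<phi> (inv g) x) * (w (\<phi> (inv g) x) / w x)" for g x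
  have S: "bounded_on E (S g)" if "g \<in> T" for g
    unfolding S_def using T(2) that by (intro bounded_on_compression_term[OF bal] \<Psi>(1)) auto
  have m_S: "m (S g) = m (\<Psi> g)" if "g \<in> T" for g
    unfolding S_def using T(2) that \<Psi>
    by (intro w_invariant_mean_compression_term[OF bal w_pos _ m inv_m]) auto
  have sum_\<Psi>: "bounded_on E (\<lambda>x. \<Sum>g\<in>T. \<Psi> g x)" by (rule bounded_on_sum) (rule \<Psi>(1))
  have sum_S: "bounded_on E (\<lambda>x. \<Sum>g\<in>T. S g x)" by (rule bounded_on_sum) (rule S)
  have "1 = m (\<lambda>x. 1)" by (rule is_mean_const[OF m, symmetric])
  also have "\<dots> = m (\<lambda>x. \<Sum>g\<in>T. \<Psi> g x)"
    by (rule is_mean_cong[OF m bounded_on_const sum_\<Psi>]) (simp add: partition)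
  also have "\<dots> = (\<Sum>g\<in>T. m (\<Psi> g))"
    by (rule is_mean_sum[OF m]) (rule \<Psi>(1))
  also have "\<dots> = (\<Sum>g\<in>T. m (S g))"
    by (simp add: m_S)
  also have "\<dots> = m (\<lambda>x. \<Sum>g\<in>T. S g x)"
    by (rule is_mean_sum[OF m, symmetric]) (rule S)
  also have "\<dots> \<le> m (\<lambda>x. 1/2)"
    by (rule is_mean_mono[OF m sum_S bounded_on_const]) (use compression in \<open>fastforce simp: S_def\<close>)
  finally show False by (simp add: is_mean_const[OF m])
qed

end

theorem proposition2p2:
  fixes G :: "('g, 'b) monoid_scheme" and X :: "'x set"
    and \<phi> :: "'g \<Rightarrow> 'x \<Rightarrow> 'x" and w :: "'x \<Rightarrow> real"
  assumes "group_action G X \<phi>"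
    and "fin_generated G"
    and "countable X"
    and "\<forall>x\<in>X. w x > 0"
    and "balanced G X \<phi> w"
    and "\<exists>T \<Psi>. compression_system G X \<phi> w T \<Psi>"
  shows "\<not> (\<exists>m. is_mean X m \<and> w_invariant G X \<phi> w m)"
proof
  assume "\<exists>m. is_mean X m \<and> w_invariant G X \<phi> w m"
  then obtain m where "is_mean X m" "w_invariant G X \<phi> w m" by blast
  moreover obtain T \<Psi> where "compression_system G X \<phi> w T \<Psi>" using assms(6) by blast
  ultimately show False
    using group_action.no_w_invariant_mean_if_compression_system[OF assms(1,5)] assms(4) by blast
qed

end
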